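(* If $G$ is a graph with minimum degree $\delta=\delta(G)\ge 2$ and maximum degree $\Delta=\Delta(G)\ge 4\lfloor\delta/2\rfloor-2$, then $$\mathrm{TC}_2(G)\le \Big\lfloor\tfrac{\delta}{2}\Big\rfloor\Big(\Delta-2\Big\lfloor\tfrac{\delta}{2}\Big\rfloor+1\Big)+\Big\lceil\tfrac{\delta}{2}\Big\rceil.$$ Moreover, the bound is sharp for every even minimum degree: for every even $\delta\ge 2$ there exists a graph with minimum degree $\delta$ satisfying the hypothesis and attaining equality.
   Context: All graphs are finite, simple and connected. $N(v)$ denotes the open neighborhood of $v$. A set $S\subseteq V(G)$ is a total $2$-dominating set if $|N(v)\cap S|\ge 2$ for every $v\in V(G)$. Two disjoint sets $U,W\subseteq V(G)$ form a total $2$-coalition if neither is a total $2$-dominating set but $U\cup W$ is. A total $2$-coalition partition of $G$ is a partition $\Omega$ of $V(G)$ in which every set forms a total $2$-coalition with some other set of $\Omega$; $\mathrm{TC}_2(G)$ is the maximum cardinality of such a partition. *)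

theory Defs
  imports Main "HOL-Library.Disjoint_Sets"
begin

definition graph :: "'a set \<Rightarrow> ('a \<Rightarrow> 'a \<Rightarrow> bool) \<Rightarrow> bool" where
  "graph V E \<longleftrightarrow> finite V \<and> V \<noteq> {} \<and>
     (\<forall>u v. E u v \<longrightarrow> u \<in> V \<and> v \<in> V) \<and>
     (\<forall>u v. E u v \<longrightarrow> E v u) \<and> (\<forall>v. \<not> E v v) \<and>
     (\<forall>u\<in>V. \<forall>v\<in>V. (u, v) \<in> {(x, y). E x y}\<^sup>*)"

definition nbhd :: "('a \<Rightarrow> 'a \<Rightarrow> bool) \<Rightarrow> 'a \<Rightarrow> 'a set" where
  "nbhd E v = {u. E v u}"

definition degree :: "('a \<Rightarrow> 'a \<Rightarrow> bool) \<Rightarrow> 'a \<Rightarrow> nat" where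
  "degree E v = card (nbhd E v)"

definition min_degree :: "'a set \<Rightarrow> ('a \<Rightarrow> 'a \<Rightarrow> bool) \<Rightarrow> nat" where
  "min_degree V E = Min (degree E ` V)"

definition max_degree :: "'a set \<Rightarrow> ('a \<Rightarrow> 'a \<Rightarrow> bool) \<Rightarrow> nat" where
  "max_degree V E = Max (degree E ` V)"

definition total_2_dominating :: "'a set \<Rightarrow> ('a \<Rightarrow> 'a \<Rightarrow> bool) \<Rightarrow> 'a set \<Rightarrow> bool" where
  "total_2_dominating V E S \<longleftrightarrow> S \<subseteq> V \<and> (\<forall>v\<in>V. card (nbhd E v \<inter> S) \<ge> 2)"

definition total_2_coalition :: "'a set \<Rightarrow> ('a \<Rightarrow> 'a \<Rightarrow> bool) \<Rightarrow> 'a set \<Rightarrow> 'a set \<Rightarrow> bool" where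
  "total_2_coalition V E U W \<longleftrightarrow> U \<inter> W = {} \<and>
     \<not> total_2_dominating V E U \<and> \<not> total_2_dominating V E W \<and>
     total_2_dominating V E (U \<union> W)"

definition total_2_coalition_partition :: "'a set \<Rightarrow> ('a \<Rightarrow> 'a \<Rightarrow> bool) \<Rightarrow> 'a set set \<Rightarrow> bool" where
  "total_2_coalition_partition V E P \<longleftrightarrow> partition_on V P \<and>
     (\<forall>U\<in>P. \<exists>W\<in>P. W \<noteq> U \<and> total_2_coalition V E U W)"

text \<open>Maximum cardinality of a total 2-coalition partition (0 if none exists).\<close>
definition TC2 :: "'a set \<Rightarrow> ('a \<Rightarrow> 'a \<Rightarrow> bool) \<Rightarrow> nat" where
  "TC2 V E = Max (insert 0 {card P | P. total_2_coalition_partition V E P})"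

end

theory Submission
  imports Defs "HOL-Library.Countable"
begin

text \<open>Fix a vertex v of minimum degree \<delta>, let \<Delta> be the maximum degree and \<Omega> a total
2-coalition partition. A block disjoint from N(v) can only form a coalition with a block meeting
N(v) at least twice. At most \<delta> blocks meet N(v); if m of those serve as such partners, then
2m \<le> \<delta> and at most \<delta> - m blocks meet N(v). A partner block y is not total 2-dominating, so some
vertex w has at most one neighbour in y; every block paired with y has to supply the missing
neighbours of w, and every other partner block, together with its own partners, supplies at least
two more. Hence y has at most \<Delta> + 1 - 2m partners, and |\<Omega>| \<le> \<delta> - m + m(\<Delta> + 1 - 2m), which
is maximal at m = \<lfloor>\<delta>/2\<rfloor> when \<Delta> \<ge> 4\<lfloor>\<delta>/2\<rfloor> - 2.

For sharpness let k = \<delta>/2 and n \<ge> 2k + 1. Take a clique on the cells (j, e) with j < k and e < 3,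
a centre joined to the cells of rows 0 and 1, and k hubs, hub i joined to row 0, to row 1 except
the cell (i, 1), and to n spokes, each spoke carrying its own copy of the clique. Column j of the
clique and of all its copies (the centre and the hubs added to column 0) is not total 2-dominating
because hub j sees only one of its vertices, but it becomes so together with any spoke of hub j.
These k columns and the kn spoke singletons form a total 2-coalition partition of size k + kn,
the bound for \<Delta> = 2k - 1 + n.\<close>

lemma degree_le_max_degree: "finite V \<Longrightarrow> w \<in> V \<Longrightarrow> degree E w \<le> max_degree V E"
  unfolding max_degree_def by simp

lemma min_degree_attained:
  assumes "finite V" "V \<noteq> {}"
  obtains v where "v \<in> V" "degree E v = min_degree V E"
proof -
  have "min_degree V E \<in> degree E ` V" unfolding min_degree_def using assms by (intro Min_in) auto
  then show ?thesis using that by (metis imageE)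
qed

lemma min_degree_eqI:
  "finite V \<Longrightarrow> v \<in> V \<Longrightarrow> degree E v = d \<Longrightarrow> (\<And>w. w \<in> V \<Longrightarrow> d \<le> degree E w) \<Longrightarrow> min_degree V E = d"
  unfolding min_degree_def by (rule Min_eqI) auto

lemma max_degree_eqI:
  "finite V \<Longrightarrow> v \<in> V \<Longrightarrow> degree E v = d \<Longrightarrow> (\<And>w. w \<in> V \<Longrightarrow> degree E w \<le> d) \<Longrightarrow> max_degree V E = d"
  unfolding max_degree_def by (rule Max_eqI) auto

lemma degree_between_cards:
  assumes "L \<subseteq> nbhd E w" "nbhd E w \<subseteq> U" "finite U"
  shows "card L \<le> degree E w \<and> degree E w \<le> card U"
  unfolding degree_def using assms by (meson card_mono finite_subset)

lemma graph_if_reachable_from: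
  assumes "finite V" "r \<in> V" "\<And>u v. E u v \<Longrightarrow> u \<in> V" "\<And>u v. E u v \<Longrightarrow> E v u" "\<And>v. \<not> E v v"
    and reach: "\<And>v. v \<in> V \<Longrightarrow> (r, v) \<in> {(x, y). E x y}\<^sup>*"
  shows "graph V E"
proof -
  have "sym ({(x, y). E x y}\<^sup>*)" using assms(4) by (intro sym_rtrancl) (auto simp: sym_def)
  then have "(u, v) \<in> {(x, y). E x y}\<^sup>*" if "u \<in> V" "v \<in> V" for u v
    using reach[OF that(1)] reach[OF that(2)] by (meson rtrancl_trans symD)
  then show ?thesis unfolding graph_def using assms(1-5) by blast
qed

lemma not_total_2_dominating_singleton: "V \<noteq> {} \<Longrightarrow> \<not> total_2_dominating V E {x}"
proof -
  assume "V \<noteq> {}"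
  then obtain v where "v \<in> V" by blast
  moreover have "card (nbhd E v \<inter> {x}) \<le> 1" by (simp add: card_le_Suc0_iff_eq)
  ultimately show ?thesis unfolding total_2_dominating_def by fastforce
qed

lemma two_le_card_nbhd_IntI:
  assumes "finite (nbhd E w)" "E w a" "E w b" "a \<in> S" "b \<in> S" "a \<noteq> b"
  shows "2 \<le> card (nbhd E w \<inter> S)"
proof -
  have "card {a, b} \<le> card (nbhd E w \<inter> S)"
    using assms by (intro card_mono) (auto simp: nbhd_def)
  then show ?thesis using \<open>a \<noteq> b\<close> by simp
qed

lemma total_2_coalition_commute: "total_2_coalition V E U W \<longleftrightarrow> total_2_coalition V E W U"
  unfolding total_2_coalition_def by (auto simp: Un_commute)

lemma TC2_le:
  assumes "\<And>P. total_2_coalition_partition V E P \<Longrightarrow> card P \<le> b"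
  shows "TC2 V E \<le> b"
proof -
  have "insert 0 {card P |P. total_2_coalition_partition V E P} \<subseteq> {..b}" using assms by auto
  then show ?thesis unfolding TC2_def by (intro Max.boundedI) (auto dest: finite_subset)
qed

lemma TC2_eqI:
  assumes "\<And>P. total_2_coalition_partition V E P \<Longrightarrow> card P \<le> b"
    and "total_2_coalition_partition V E P\<^sub>0" "card P\<^sub>0 = b"
  shows "TC2 V E = b"
proof (rule antisym)
  show "TC2 V E \<le> b" using assms(1) by (rule TC2_le)
  have "insert 0 {card P |P. total_2_coalition_partition V E P} \<subseteq> {..b}" using assms(1) by auto
  then show "b \<le> TC2 V E"
    unfolding TC2_def using assms(2,3) by (intro Max_ge) (auto dest: finite_subset)
qed

section \<open>Relabelling the vertices\<close>

definition relabel :: "('a \<Rightarrow> 'b) \<Rightarrow> ('a \<Rightarrow> 'a \<Rightarrow> bool) \<Rightarrow> 'b \<Rightarrow> 'b \<Rightarrow> bool" where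
  "relabel f E a b \<longleftrightarrow> (\<exists>x y. a = f x \<and> b = f y \<and> E x y)"

lemma relabel_apply: "inj f \<Longrightarrow> relabel f E (f x) (f y) \<longleftrightarrow> E x y"
  unfolding relabel_def by (auto dest: injD)

lemma nbhd_relabel: "inj f \<Longrightarrow> nbhd (relabel f E) (f x) = f ` nbhd E x"
  unfolding nbhd_def relabel_def by (auto dest: injD)

lemma degree_relabel: "inj f \<Longrightarrow> degree (relabel f E) (f x) = degree E x"
  unfolding degree_def nbhd_relabel by (simp add: card_image inj_on_subset)

lemma degree_relabel_image: "inj f \<Longrightarrow> degree (relabel f E) ` f ` V = degree E ` V"
  by (simp add: image_image degree_relabel)

lemma min_degree_relabel: "inj f \<Longrightarrow> min_degree (f ` V) (relabel f E) = min_degree V E"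
  unfolding min_degree_def by (simp add: degree_relabel_image)

lemma max_degree_relabel: "inj f \<Longrightarrow> max_degree (f ` V) (relabel f E) = max_degree V E"
  unfolding max_degree_def by (simp add: degree_relabel_image)

lemma graph_relabel:
  assumes f: "inj f" and G: "graph V E"
  shows "graph (f ` V) (relabel f E)"
proof -
  have E: "\<And>u v. E u v \<Longrightarrow> u \<in> V \<and> v \<in> V" "\<And>u v. E u v \<Longrightarrow> E v u" "\<And>v. \<not> E v v"
    and conn: "\<And>u v. u \<in> V \<Longrightarrow> v \<in> V \<Longrightarrow> (u, v) \<in> {(x, y). E x y}\<^sup>*"
    using G unfolding graph_def by auto
  have conn': "(f x, f y) \<in> {(a, b). relabel f E a b}\<^sup>*" if "(x, y) \<in> {(a, b). E a b}\<^sup>*" for x y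
    using that
  proof (induction rule: rtrancl_induct)
    case (step y z)
    then show ?case using relabel_apply[OF f] by (simp add: rtrancl_into_rtrancl)
  qed simp
  show ?thesis unfolding graph_def
  proof (intro conjI allI impI ballI)
    show "finite (f ` V)" "f ` V \<noteq> {}" using G unfolding graph_def by auto
  next
    fix u v assume "relabel f E u v"
    then obtain x y where "u = f x" "v = f y" "E x y" unfolding relabel_def by blast
    then show "u \<in> f ` V" "v \<in> f ` V" "relabel f E v u"
      using E(1,2) relabel_apply[OF f] by auto
  next
    fix v show "\<not> relabel f E v v" using E(3) f unfolding relabel_def by (auto dest: injD)
  next
    fix u v assume "u \<in> f ` V" "v \<in> f ` V"
    then show "(u, v) \<in> {(x, y). relabel f E x y}\<^sup>*" using conn conn' by blast
  qed
qed

lemma total_2_dominating_relabel: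
  assumes f: "inj f" and "S \<subseteq> V"
  shows "total_2_dominating (f ` V) (relabel f E) (f ` S) \<longleftrightarrow> total_2_dominating V E S"
proof -
  have "nbhd (relabel f E) (f x) \<inter> f ` S = f ` (nbhd E x \<inter> S)" for x
    unfolding nbhd_relabel[OF f] using f by (simp add: image_Int)
  then have "card (nbhd (relabel f E) (f x) \<inter> f ` S) = card (nbhd E x \<inter> S)" for x
    using f by (simp add: card_image inj_on_subset)
  then show ?thesis unfolding total_2_dominating_def using \<open>S \<subseteq> V\<close> f
    by (auto simp: inj_image_subset_iff)
qed

lemma total_2_coalition_partition_relabel:
  assumes f: "inj f" and P: "total_2_coalition_partition V E P"
  shows "total_2_coalition_partition (f ` V) (relabel f E) ((`) f ` P)"
proof -
  have part: "partition_on V P" and coal: "\<And>U. U \<in> P \<Longrightarrow> \<exists>W\<in>P. W \<noteq> U \<and> total_2_coalition V E U W"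
    using P unfolding total_2_coalition_partition_def by auto
  have "partition_on (f ` V) ((`) f ` P - {{}})"
    using partition_on_inj_image[OF part inj_on_subset[OF f subset_UNIV]] .
  moreover have "(`) f ` P - {{}} = (`) f ` P" using partition_onD3[OF part] by auto
  ultimately have part': "partition_on (f ` V) ((`) f ` P)" by simp
  have coal': "total_2_coalition (f ` V) (relabel f E) (f ` U) (f ` W)"
    if "U \<in> P" "W \<in> P" "total_2_coalition V E U W" for U W
  proof -
    have "U \<subseteq> V" "W \<subseteq> V" using partition_onD1[OF part] that(1,2) by blast+
    then show ?thesis using that(3) total_2_dominating_relabel[OF f] f
      unfolding total_2_coalition_def by (simp add: image_Int[symmetric] image_Un[symmetric])
  qed
  show ?thesis unfolding total_2_coalition_partition_def
    using part' coal coal' f by (fastforce simp: inj_image_eq_iff)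
qed

lemma card_image_of_images: "inj f \<Longrightarrow> card ((`) f ` P) = card P"
  by (simp add: card_image inj_on_def inj_image_eq_iff)

section \<open>The upper bound\<close>

lemma sum_card_Int_blocks:
  assumes P: "partition_on V P" and "finite V" and "Q \<subseteq> P"
  shows "(\<Sum>S\<in>Q. card (B \<inter> S)) = card (B \<inter> \<Union>Q)"
proof -
  have "finite Q" using finite_elements[OF \<open>finite V\<close> P] \<open>Q \<subseteq> P\<close> finite_subset by blast
  moreover have "\<forall>S\<in>Q. finite (B \<inter> S)"
    using partition_onD1[OF P] \<open>Q \<subseteq> P\<close> \<open>finite V\<close>
    by (metis Union_upper finite_Int finite_subset subsetD)
  moreover have "\<forall>S\<in>Q. \<forall>T\<in>Q. S \<noteq> T \<longrightarrow> (B \<inter> S) \<inter> (B \<inter> T) = {}"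
    using disjointD[OF partition_onD2[OF P]] \<open>Q \<subseteq> P\<close> by blast
  ultimately have "card (\<Union>S\<in>Q. B \<inter> S) = (\<Sum>S\<in>Q. card (B \<inter> S))"
    by (rule card_UN_disjoint)
  then show ?thesis by (simp only: Int_Union)
qed

lemma sum_card_Int_blocks_le:
  assumes "partition_on V P" "finite V" "finite B" "Q \<subseteq> P"
  shows "(\<Sum>S\<in>Q. card (B \<inter> S)) \<le> card B"
  unfolding sum_card_Int_blocks[OF assms(1,2,4)] using assms(3) by (simp add: card_mono)

lemma card_blocks_meeting_le:
  assumes P: "partition_on V P" and "finite V" "finite B"
  shows "card {S\<in>P. S \<inter> B \<noteq> {}} + card {S\<in>P. 2 \<le> card (B \<inter> S)} \<le> card B"
proof -
  have finP: "finite P" using finite_elements[OF \<open>finite V\<close> P] .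
  have "card {S\<in>P. S \<inter> B \<noteq> {}} + card {S\<in>P. 2 \<le> card (B \<inter> S)}
      = (\<Sum>S\<in>P. of_bool (S \<inter> B \<noteq> {}) + of_bool (2 \<le> card (B \<inter> S)))"
    using finP by (simp add: sum.distrib Int_def)
  also have "\<dots> \<le> (\<Sum>S\<in>P. card (B \<inter> S))"
  proof (rule sum_mono)
    fix S assume "S \<in> P"
    have "finite (B \<inter> S)" "S \<inter> B = B \<inter> S" using \<open>finite B\<close> by auto
    then show "of_bool (S \<inter> B \<noteq> {}) + of_bool (2 \<le> card (B \<inter> S)) \<le> card (B \<inter> S)"
      by (cases "B \<inter> S = {}") (simp_all add: Suc_le_eq card_gt_0_iff)
  qed
  also have "\<dots> \<le> card B" using sum_card_Int_blocks_le[OF P \<open>finite V\<close> \<open>finite B\<close> order_refl] .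
  finally show ?thesis .
qed

lemma total_2_coalition_partner_meets_twice:
  assumes "total_2_coalition V E U W" "v \<in> V" "nbhd E v \<inter> U = {}"
  shows "2 \<le> card (nbhd E v \<inter> W)"
proof -
  have "2 \<le> card (nbhd E v \<inter> (U \<union> W))"
    using assms(1,2) unfolding total_2_coalition_def total_2_dominating_def by blast
  moreover have "nbhd E v \<inter> (U \<union> W) = nbhd E v \<inter> W" using assms(3) by blast
  ultimately show ?thesis by simp
qed

lemma pair_sum_lower_bounds:
  fixes a :: nat
  assumes "finite F" "F \<noteq> {}" "\<And>x. x \<in> F \<Longrightarrow> 2 \<le> a + c x"
  shows "2 \<le> a + sum c F" and "a < 2 \<Longrightarrow> card F + 1 \<le> a + sum c F"
proof -
  have "card F * (2 - a) \<le> sum c F"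
    using sum_bounded_below[of F "2 - a" c] assms(3) by fastforce
  moreover have "1 \<le> card F" using assms(1,2) by (simp add: Suc_le_eq card_gt_0_iff)
  ultimately show "2 \<le> a + sum c F" and "a < 2 \<Longrightarrow> card F + 1 \<le> a + sum c F"
    by (cases "a = 0"; cases "a = 1"; simp)+
qed

lemma card_fibre_plus_twice_card_image_le:
  assumes P: "partition_on V P" and "finite V" "finite B"
    and X: "X \<subseteq> P" "p ` X \<subseteq> P" "p ` X \<inter> X = {}"
    and covers: "\<And>x. x \<in> X \<Longrightarrow> 2 \<le> card (B \<inter> (x \<union> p x))"
    and y: "y \<in> p ` X" "card (B \<inter> y) < 2"
  shows "card {x\<in>X. p x = y} + 2 * card (p ` X) \<le> card B + 1"
proof -
  define c where "c S = card (B \<inter> S)" for S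
  define F where "F z = {x\<in>X. p x = z}" for z
  have finX: "finite X" and finI: "finite (p ` X)"
    using finite_elements[OF \<open>finite V\<close> P] X(1) finite_subset by blast+
  have F_ne: "F z \<noteq> {}" if "z \<in> p ` X" for z using that unfolding F_def by blast
  have pair: "2 \<le> c z + c x" if "z \<in> p ` X" "x \<in> F z" for z x
  proof -
    have "x \<in> P" "z \<in> P" "x \<noteq> z" "z = p x" using that X unfolding F_def by blast+
    then have "x \<inter> z = {}" using disjointD[OF partition_onD2[OF P]] by blast
    then have "c (x \<union> z) = c x + c z"
      unfolding c_def using \<open>finite B\<close>
      by (subst card_Un_disjoint[symmetric]) (auto simp: Int_Un_distrib)
    then show ?thesis using covers[of x] \<open>z = p x\<close> that(2) unfolding F_def c_def by auto
  qed
  have "(\<Sum>z\<in>p ` X. c z + sum c (F z)) = sum c (p ` X) + sum c X"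
    unfolding sum.distrib F_def using sum.group[OF finX finI order_refl, of c] by simp
  also have "\<dots> = sum c (p ` X \<union> X)" by (rule sum.union_disjoint[OF finI finX X(3), symmetric])
  also have "\<dots> \<le> card B"
    unfolding c_def using X by (intro sum_card_Int_blocks_le[OF P \<open>finite V\<close> \<open>finite B\<close>]) blast
  finally have upper: "(\<Sum>z\<in>p ` X. c z + sum c (F z)) \<le> card B" .
  have "(\<Sum>z\<in>p ` X. if z = y then card (F y) + 1 else 2) \<le> (\<Sum>z\<in>p ` X. c z + sum c (F z))"
  proof (rule sum_mono)
    fix z assume z: "z \<in> p ` X"
    have "finite (F z)" using finX unfolding F_def by simp
    note bounds = pair_sum_lower_bounds[OF this F_ne[OF z] pair[OF z]]
    show "(if z = y then card (F y) + 1 else 2) \<le> c z + sum c (F z)"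
      using bounds y(2) unfolding c_def by auto
  qed
  moreover have "(\<Sum>z\<in>p ` X. if z = y then card (F y) + 1 else 2)
      = card (F y) + 1 + 2 * (card (p ` X) - 1)"
    using sum.remove[OF finI y(1), of "\<lambda>z. if z = y then card (F y) + 1 else 2"] finI y(1) by simp
  moreover have "1 \<le> card (p ` X)" using finI y(1) by (simp add: Suc_le_eq card_gt_0_iff) blast
  ultimately show ?thesis using upper unfolding F_def by linarith
qed

lemma card_le_partner_bound:
  assumes G: "graph V E" and P: "partition_on V P"
    and X: "X \<subseteq> P" "p ` X \<subseteq> P" "p ` X \<inter> X = {}"
    and coalition: "\<And>x. x \<in> X \<Longrightarrow> total_2_coalition V E x (p x)"
  shows "card X \<le> card (p ` X) * (max_degree V E + 1 - 2 * card (p ` X))"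
proof -
  have finV: "finite V" and nbhd_V: "\<And>w. nbhd E w \<subseteq> V"
    using G unfolding graph_def nbhd_def by auto
  have finX: "finite X" and finI: "finite (p ` X)"
    using finite_elements[OF finV P] X(1) finite_subset by blast+
  have fibre: "card {x\<in>X. p x = y} \<le> max_degree V E + 1 - 2 * card (p ` X)" if y: "y \<in> p ` X" for y
  proof -
    obtain x where "x \<in> X" "y = p x" using y by blast
    then have "\<not> total_2_dominating V E y" and "y \<subseteq> V"
      using coalition X(2) partition_onD1[OF P] unfolding total_2_coalition_def by blast+
    then obtain w where w: "w \<in> V" "card (nbhd E w \<inter> y) < 2"
      unfolding total_2_dominating_def by force
    have "2 \<le> card (nbhd E w \<inter> (x \<union> p x))" if "x \<in> X" for x
      using coalition[OF that] w(1) unfolding total_2_coalition_def total_2_dominating_def by blast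
    then have "card {x\<in>X. p x = y} + 2 * card (p ` X) \<le> card (nbhd E w) + 1"
      using finite_subset[OF nbhd_V finV]
      by (intro card_fibre_plus_twice_card_image_le[OF P finV _ X _ y w(2)])
    moreover have "card (nbhd E w) \<le> max_degree V E"
      using degree_le_max_degree[OF finV w(1)] unfolding degree_def .
    ultimately show ?thesis by linarith
  qed
  have "card X = (\<Sum>y\<in>p ` X. card {x\<in>X. p x = y})"
    using sum.group[OF finX finI order_refl, of "\<lambda>_. 1::nat"] by simp
  also have "\<dots> \<le> card (p ` X) * (max_degree V E + 1 - 2 * card (p ` X))"
    using sum_bounded_above[of "p ` X" _ "max_degree V E + 1 - 2 * card (p ` X)"] fibre by simp
  finally show ?thesis .
qed

lemma mult_diff_double_mono:
  fixes m k D :: nat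
  assumes "m \<le> k" "4 * k - 2 \<le> D"
  shows "m * (D - 2 * m) \<le> k * (D - 2 * k)"
proof (cases "m = k")
  case False
  then have "2 * m \<le> D" "2 * k \<le> D" "2 * k + 2 * m \<le> D" using assms by auto
  then have "int (m * (D - 2 * m)) = int m * (int D - 2 * int m)"
    and "int (k * (D - 2 * k)) = int k * (int D - 2 * int k)"
    and "0 \<le> (int k - int m) * (int D - 2 * int k - 2 * int m)"
    using assms(1) by (auto simp: of_nat_diff)
  then have "int (m * (D - 2 * m)) \<le> int (k * (D - 2 * k))" by (simp add: algebra_simps)
  then show ?thesis by linarith
qed simp

lemma partition_bound_arith:
  fixes a x m d D :: nat
  assumes "a + m \<le> d" "x \<le> m * (D + 1 - 2 * m)" "m \<le> d div 2" "4 * (d div 2) - 2 \<le> D"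
  shows "a + x \<le> d div 2 * (D - 2 * (d div 2) + 1) + (d + 1) div 2"
proof -
  define k where "k = d div 2"
  have "m \<le> k" "4 * k - 2 \<le> D" using assms(3,4) unfolding k_def by auto
  then have "2 * m \<le> D" by arith
  then have "m * (D + 1 - 2 * m) = m * (D - 2 * m) + m" by (simp add: Suc_diff_le)
  moreover have "k * (D - 2 * k + 1) = k * (D - 2 * k) + k" by simp
  moreover have "(d + 1) div 2 = d - k" unfolding k_def by arith
  moreover note mult_diff_double_mono[OF \<open>m \<le> k\<close> \<open>4 * k - 2 \<le> D\<close>]
  ultimately show ?thesis using assms(1,2) unfolding k_def[symmetric] by linarith
qed

lemma card_total_2_coalition_partition_le:
  assumes G: "graph V E" and \<Delta>: "4 * (min_degree V E div 2) - 2 \<le> max_degree V E"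
    and P: "total_2_coalition_partition V E P"
  shows "card P \<le> min_degree V E div 2 * (max_degree V E - 2 * (min_degree V E div 2) + 1)
                   + (min_degree V E + 1) div 2"
proof -
  have finV: "finite V" and "V \<noteq> {}" and nbhd_V: "\<And>w. nbhd E w \<subseteq> V"
    using G unfolding graph_def nbhd_def by auto
  have part: "partition_on V P" and coal: "\<And>U. U \<in> P \<Longrightarrow> \<exists>W\<in>P. W \<noteq> U \<and> total_2_coalition V E U W"
    using P unfolding total_2_coalition_partition_def by auto
  obtain v where v: "v \<in> V" "degree E v = min_degree V E"
    using min_degree_attained[OF finV \<open>V \<noteq> {}\<close>] .
  define N where "N = nbhd E v"
  have "finite N" using finite_subset[OF nbhd_V finV] unfolding N_def .
  define A where "A = {S\<in>P. S \<inter> N \<noteq> {}}"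
  define Y where "Y = {S\<in>P. 2 \<le> card (N \<inter> S)}"
  have AY: "card A + card Y \<le> min_degree V E"
    using card_blocks_meeting_le[OF part finV \<open>finite N\<close>] v(2)
    unfolding A_def Y_def N_def degree_def by simp
  have "Y \<subseteq> A" unfolding A_def Y_def by (auto simp: inf_commute)
  have "\<exists>W\<in>Y. total_2_coalition V E U W" if U: "U \<in> P - A" for U
  proof -
    obtain W where W: "W \<in> P" "total_2_coalition V E U W" using coal U by blast
    moreover have "N \<inter> U = {}" using U unfolding A_def by blast
    ultimately show ?thesis
      using total_2_coalition_partner_meets_twice[OF W(2) v(1)] unfolding N_def Y_def by blast
  qed
  then obtain p where p: "\<And>U. U \<in> P - A \<Longrightarrow> p U \<in> Y \<and> total_2_coalition V E U (p U)"
    by metis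
  have I_Y: "p ` (P - A) \<subseteq> Y" using p by blast
  have bound: "card (P - A) \<le> card (p ` (P - A)) * (max_degree V E + 1 - 2 * card (p ` (P - A)))"
    using I_Y \<open>Y \<subseteq> A\<close> p
    by (intro card_le_partner_bound[OF G part]) (auto simp: Y_def)
  have "finite A" using finite_elements[OF finV part] unfolding A_def by simp
  then have "card (p ` (P - A)) \<le> card Y" "card Y \<le> card A"
    using I_Y \<open>Y \<subseteq> A\<close> by (auto intro: card_mono finite_subset)
  then have "card A + card (P - A) \<le>
      min_degree V E div 2 * (max_degree V E - 2 * (min_degree V E div 2) + 1)
      + (min_degree V E + 1) div 2"
    using AY by (intro partition_bound_arith[OF _ bound _ \<Delta>]) auto
  moreover have "card P = card A + card (P - A)"
    using \<open>finite A\<close> finite_elements[OF finV part] card_mono[of P A] card_Diff_subset[of A P]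
    unfolding A_def by auto
  ultimately show ?thesis by simp
qed

section \<open>The extremal graphs\<close>

lemma partition_on_fibres: "partition_on A ((\<lambda>b. {x \<in> A. f x = b}) ` f ` A)"
  by (rule partition_onI) (auto simp: disjnt_def)

lemma card_fibres: "card ((\<lambda>b. {x \<in> A. f x = b}) ` f ` A) = card (f ` A)"
  by (rule card_image) (auto simp: inj_on_def)

datatype extremal_node = Centre | Hub nat | Core "nat \<times> nat" | Spoke "nat \<times> nat"
  | Copy "nat \<times> nat" "nat \<times> nat"

instance extremal_node :: countable by countable_datatype

definition cells :: "nat \<Rightarrow> (nat \<times> nat) set" where
  "cells k = {..<k} \<times> {..<3}"

definition spokes :: "nat \<Rightarrow> nat \<Rightarrow> (nat \<times> nat) set" where
  "spokes k n = {..<k} \<times> {..<n}"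

fun extremal_arc :: "nat \<Rightarrow> nat \<Rightarrow> extremal_node \<Rightarrow> extremal_node \<Rightarrow> bool" where
  "extremal_arc k n Centre (Core c) \<longleftrightarrow> c \<in> {..<k} \<times> {0, 1}"
| "extremal_arc k n (Hub i) (Core c) \<longleftrightarrow> i < k \<and> c \<in> {..<k} \<times> {0, 1} - {(i, 1)}"
| "extremal_arc k n (Hub i) (Spoke s) \<longleftrightarrow> i < k \<and> s \<in> {i} \<times> {..<n}"
| "extremal_arc k n (Core c) (Core c') \<longleftrightarrow> c \<in> cells k \<and> c' \<in> cells k \<and> c \<noteq> c'"
| "extremal_arc k n (Spoke s) (Copy s' c) \<longleftrightarrow> s' = s \<and> s \<in> spokes k n \<and> c \<in> cells k"
| "extremal_arc k n (Copy s c) (Copy s' c') \<longleftrightarrow>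
     s' = s \<and> s \<in> spokes k n \<and> c \<in> cells k \<and> c' \<in> cells k \<and> c \<noteq> c'"
| "extremal_arc k n _ _ \<longleftrightarrow> False"

definition extremal_adj :: "nat \<Rightarrow> nat \<Rightarrow> extremal_node \<Rightarrow> extremal_node \<Rightarrow> bool" where
  "extremal_adj k n a b \<longleftrightarrow> extremal_arc k n a b \<or> extremal_arc k n b a"

definition extremal_vertices :: "nat \<Rightarrow> nat \<Rightarrow> extremal_node set" where
  "extremal_vertices k n = insert Centre (Hub ` {..<k} \<union> Core ` cells k \<union> Spoke ` spokes k n
     \<union> case_prod Copy ` (spokes k n \<times> cells k))"

lemma extremal_vertices_iff [simp]:
  "Centre \<in> extremal_vertices k n"
  "Hub i \<in> extremal_vertices k n \<longleftrightarrow> i < k"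
  "Core c \<in> extremal_vertices k n \<longleftrightarrow> c \<in> cells k"
  "Spoke s \<in> extremal_vertices k n \<longleftrightarrow> s \<in> spokes k n"
  "Copy s c \<in> extremal_vertices k n \<longleftrightarrow> s \<in> spokes k n \<and> c \<in> cells k"
  unfolding extremal_vertices_def by auto

lemma extremal_vertices_nonempty: "extremal_vertices k n \<noteq> {}"
  using extremal_vertices_iff(1) by blast

lemma finite_extremal_vertices: "finite (extremal_vertices k n)"
  unfolding extremal_vertices_def cells_def spokes_def by simp

lemma extremal_adj_commute: "extremal_adj k n a b \<longleftrightarrow> extremal_adj k n b a"
  unfolding extremal_adj_def by blast

lemma extremal_adj_in_vertices: "extremal_adj k n a b \<Longrightarrow> a \<in> extremal_vertices k n"
  unfolding extremal_adj_def by (cases a; cases b) (auto simp: cells_def spokes_def)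

lemma extremal_adj_irrefl: "\<not> extremal_adj k n a a"
  unfolding extremal_adj_def by (cases a) auto

lemma graph_extremal:
  assumes "1 \<le> k"
  shows "graph (extremal_vertices k n) (extremal_adj k n)"
proof (rule graph_if_reachable_from[OF finite_extremal_vertices])
  let ?R = "{(x, y). extremal_adj k n x y}"
  have step: "(Centre, b) \<in> ?R\<^sup>*" if "(Centre, a) \<in> ?R\<^sup>*" "extremal_adj k n a b" for a b
    using that by (simp add: rtrancl.rtrancl_into_rtrancl)
  have core00: "(Centre, Core (0, 0)) \<in> ?R\<^sup>*"
    using assms by (intro step[OF rtrancl_refl]) (simp add: extremal_adj_def)
  have hub: "(Centre, Hub i) \<in> ?R\<^sup>*" if "i < k" for i
    using that assms by (intro step[OF core00]) (simp add: extremal_adj_def)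
  have spoke: "(Centre, Spoke s) \<in> ?R\<^sup>*" if "s \<in> spokes k n" for s
    using that by (intro step[OF hub[of "fst s"]]) (auto simp: extremal_adj_def spokes_def)
  show "(Centre, v) \<in> ?R\<^sup>*" if "v \<in> extremal_vertices k n" for v
  proof (cases v)
    case (Core c)
    show ?thesis
    proof (cases "c = (0, 0)")
      case False
      then show ?thesis using Core that assms
        by (intro step[OF core00]) (auto simp: extremal_adj_def cells_def)
    qed (use Core core00 in simp)
  next
    case (Copy s c)
    then show ?thesis using that by (intro step[OF spoke[of s]]) (auto simp: extremal_adj_def)
  qed (use that hub spoke in auto)
qed (use extremal_adj_in_vertices extremal_adj_commute extremal_adj_irrefl in auto)

lemma card_cells: "card (cells k) = 3 * k"
  unfolding cells_def by (simp add: card_cartesian_product)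

lemma finite_cells: "finite (cells k)"
  unfolding cells_def by simp

lemma nbhd_extremal_Centre: "nbhd (extremal_adj k n) Centre = Core ` ({..<k} \<times> {0, 1})"
  unfolding nbhd_def extremal_adj_def by (auto elim: extremal_arc.elims)

lemma nbhd_extremal_Hub:
  assumes "i < k"
  shows "nbhd (extremal_adj k n) (Hub i)
           = Core ` ({..<k} \<times> {0, 1} - {(i, 1)}) \<union> Spoke ` ({i} \<times> {..<n})"
proof (intro set_eqI)
  fix x
  show "x \<in> nbhd (extremal_adj k n) (Hub i) \<longleftrightarrow>
      x \<in> Core ` ({..<k} \<times> {0, 1} - {(i, 1)}) \<union> Spoke ` ({i} \<times> {..<n})"
    using assms unfolding nbhd_def extremal_adj_def by (cases x) auto
qed

lemma degree_extremal_Centre: "degree (extremal_adj k n) Centre = 2 * k"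
  unfolding degree_def nbhd_extremal_Centre
  by (simp add: card_image inj_on_def card_cartesian_product)

lemma degree_extremal_Hub: "i < k \<Longrightarrow> degree (extremal_adj k n) (Hub i) = 2 * k - 1 + n"
  unfolding degree_def nbhd_extremal_Hub
  by (subst card_Un_disjoint)
    (auto simp: card_image inj_on_def card_cartesian_product card_Diff_singleton)

lemma degree_extremal_bounds:
  assumes k: "1 \<le> k" and n: "2 * k + 1 \<le> n" and z: "z \<in> extremal_vertices k n"
  shows "2 * k \<le> degree (extremal_adj k n) z \<and> degree (extremal_adj k n) z \<le> 2 * k - 1 + n"
proof (cases z)
  case Centre
  then show ?thesis using degree_extremal_Centre n by simp
next
  case (Hub i)
  then show ?thesis using degree_extremal_Hub z n by simp
next
  case (Core c)
  let ?L = "Core ` (cells k - {c})"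
  have "card ?L \<le> degree (extremal_adj k n) z \<and>
      degree (extremal_adj k n) z \<le> card (insert Centre (Hub ` {..<k} \<union> ?L))"
    using Core z by (intro degree_between_cards)
      (auto simp: nbhd_def extremal_adj_def finite_cells elim: extremal_arc.elims)
  moreover have "card (insert Centre (Hub ` {..<k} \<union> ?L)) \<le> 1 + (k + card ?L)"
    using card_Un_le[of "Hub ` {..<k}" ?L] card_image_le[of "{..<k}" Hub]
    by (simp add: card_insert_if finite_cells)
  moreover have "card ?L = 3 * k - 1" using Core z by (simp add: card_image inj_on_def card_cells)
  ultimately show ?thesis using k n by linarith
next
  case (Spoke s)
  let ?L = "Copy s ` cells k"
  have "card ?L \<le> degree (extremal_adj k n) z \<and>
      degree (extremal_adj k n) z \<le> card (insert (Hub (fst s)) ?L)"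
    using Spoke z by (intro degree_between_cards)
      (auto simp: nbhd_def extremal_adj_def finite_cells spokes_def elim: extremal_arc.elims)
  moreover have "card ?L = 3 * k" by (simp add: card_image inj_on_def card_cells)
  ultimately show ?thesis using k n by (simp add: card_insert_if finite_cells image_iff) linarith
next
  case (Copy s c)
  let ?L = "Copy s ` (cells k - {c})"
  have "card ?L \<le> degree (extremal_adj k n) z \<and>
      degree (extremal_adj k n) z \<le> card (insert (Spoke s) ?L)"
    using Copy z by (intro degree_between_cards)
      (auto simp: nbhd_def extremal_adj_def finite_cells elim: extremal_arc.elims)
  moreover have "card ?L = 3 * k - 1" using Copy z by (simp add: card_image inj_on_def card_cells)
  ultimately show ?thesis using k n by (simp add: card_insert_if finite_cells image_iff) linarith
qed

lemma min_degree_extremal: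
  "1 \<le> k \<Longrightarrow> 2 * k + 1 \<le> n \<Longrightarrow> min_degree (extremal_vertices k n) (extremal_adj k n) = 2 * k"
  using degree_extremal_bounds[of k n]
  by (intro min_degree_eqI[OF finite_extremal_vertices _ degree_extremal_Centre]) auto

lemma max_degree_extremal:
  "1 \<le> k \<Longrightarrow> 2 * k + 1 \<le> n \<Longrightarrow> max_degree (extremal_vertices k n) (extremal_adj k n) = 2 * k - 1 + n"
  using degree_extremal_bounds[of k n]
  by (intro max_degree_eqI[OF finite_extremal_vertices _ degree_extremal_Hub[of 0]]) auto

fun extremal_block :: "extremal_node \<Rightarrow> nat + nat \<times> nat" where
  "extremal_block (Spoke s) = Inr s"
| "extremal_block (Core c) = Inl (fst c)"
| "extremal_block (Copy s c) = Inl (fst c)"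
| "extremal_block _ = Inl 0"

definition extremal_partition :: "nat \<Rightarrow> nat \<Rightarrow> extremal_node set set" where
  "extremal_partition k n = (\<lambda>b. {z \<in> extremal_vertices k n. extremal_block z = b})
     ` extremal_block ` extremal_vertices k n"

definition extremal_class :: "nat \<Rightarrow> nat \<Rightarrow> nat \<Rightarrow> extremal_node set" where
  "extremal_class k n j = {z \<in> extremal_vertices k n. extremal_block z = Inl j}"

lemma extremal_block_image:
  assumes "1 \<le> k"
  shows "extremal_block ` extremal_vertices k n = Inl ` {..<k} \<union> Inr ` spokes k n"
proof
  show "extremal_block ` extremal_vertices k n \<subseteq> Inl ` {..<k} \<union> Inr ` spokes k n"
  proof
    fix b assume "b \<in> extremal_block ` extremal_vertices k n"
    then obtain z where "z \<in> extremal_vertices k n" "b = extremal_block z" by blast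
    then show "b \<in> Inl ` {..<k} \<union> Inr ` spokes k n"
      using assms by (cases z) (auto simp: cells_def)
  qed
  have "Inl j \<in> extremal_block ` extremal_vertices k n" if "j < k" for j
    using that by (intro rev_image_eqI[of "Core (j, 0)"]) (auto simp: cells_def)
  moreover have "Inr s \<in> extremal_block ` extremal_vertices k n" if "s \<in> spokes k n" for s
    using that by (intro rev_image_eqI[of "Spoke s"]) auto
  ultimately show "Inl ` {..<k} \<union> Inr ` spokes k n \<subseteq> extremal_block ` extremal_vertices k n"
    by blast
qed

lemma card_extremal_partition:
  assumes "1 \<le> k"
  shows "card (extremal_partition k n) = k + k * n"
proof -
  have "card (Inl ` {..<k} \<union> Inr ` spokes k n :: (nat + nat \<times> nat) set) = k + k * n"
    by (subst card_Un_disjoint) (auto simp: card_image spokes_def card_cartesian_product)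
  then show ?thesis
    unfolding extremal_partition_def card_fibres unfolding extremal_block_image[OF assms] .
qed

lemma extremal_class_not_dominating:
  assumes "j < k"
  shows "\<not> total_2_dominating (extremal_vertices k n) (extremal_adj k n) (extremal_class k n j)"
proof -
  have "nbhd (extremal_adj k n) (Hub j) \<inter> extremal_class k n j \<subseteq> {Core (j, 0)}"
    using assms unfolding nbhd_extremal_Hub[OF assms] extremal_class_def by auto
  then have "card (nbhd (extremal_adj k n) (Hub j) \<inter> extremal_class k n j) \<le> 1"
    using card_mono[of "{Core (j, 0)}"] by fastforce
  moreover have "Hub j \<in> extremal_vertices k n" using assms by simp
  ultimately show ?thesis unfolding total_2_dominating_def by fastforce
qed

lemma extremal_class_insert_spoke_dominating:
  assumes "j < k" "t < n"
  shows "total_2_dominating (extremal_vertices k n) (extremal_adj k n)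
           (insert (Spoke (j, t)) (extremal_class k n j))"
  unfolding total_2_dominating_def
proof (intro conjI ballI)
  let ?S = "insert (Spoke (j, t)) (extremal_class k n j)"
  show "?S \<subseteq> extremal_vertices k n" using assms by (auto simp: extremal_class_def spokes_def)
  have other_rows: "\<exists>r r'. r < 3 \<and> r' < 3 \<and> r \<noteq> r' \<and> r \<noteq> e \<and> r' \<noteq> e" for e :: nat
    by (rule exI[of _ "if e = 0 then 1 else 0"], rule exI[of _ "if e = 2 then 1 else 2"]) auto
  fix w assume w: "w \<in> extremal_vertices k n"
  have "nbhd (extremal_adj k n) w \<subseteq> extremal_vertices k n"
    unfolding nbhd_def using extremal_adj_in_vertices extremal_adj_commute by blast
  then have fin: "finite (nbhd (extremal_adj k n) w)"
    using finite_extremal_vertices by (rule finite_subset)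
  show "2 \<le> card (nbhd (extremal_adj k n) w \<inter> ?S)"
  proof (cases w)
    case Centre
    then show ?thesis using assms
      by (intro two_le_card_nbhd_IntI[OF fin, of "Core (j, 0)" "Core (j, 1)"])
         (auto simp: extremal_adj_def extremal_class_def cells_def)
  next
    case (Hub i)
    show ?thesis
    proof (cases "i = j")
      case True
      then show ?thesis using assms Hub
        by (intro two_le_card_nbhd_IntI[OF fin, of "Core (j, 0)" "Spoke (j, t)"])
           (auto simp: extremal_adj_def extremal_class_def cells_def)
    next
      case False
      then show ?thesis using assms Hub w
        by (intro two_le_card_nbhd_IntI[OF fin, of "Core (j, 0)" "Core (j, 1)"])
           (auto simp: extremal_adj_def extremal_class_def cells_def)
    qed
  next
    case (Core c)
    obtain i e where "c = (i, e)" by fastforce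
    moreover obtain r r' where "r < 3" "r' < 3" "r \<noteq> r'" "r \<noteq> e" "r' \<noteq> e"
      using other_rows by blast
    ultimately show ?thesis using assms Core w
      by (intro two_le_card_nbhd_IntI[OF fin, of "Core (j, r)" "Core (j, r')"])
         (auto simp: extremal_adj_def extremal_class_def cells_def)
  next
    case (Spoke s)
    then show ?thesis using assms w
      by (intro two_le_card_nbhd_IntI[OF fin, of "Copy s (j, 0)" "Copy s (j, 1)"])
         (auto simp: extremal_adj_def extremal_class_def cells_def)
  next
    case (Copy s c)
    obtain i e where "c = (i, e)" by fastforce
    moreover obtain r r' where "r < 3" "r' < 3" "r \<noteq> r'" "r \<noteq> e" "r' \<noteq> e"
      using other_rows by blast
    ultimately show ?thesis using assms Copy w
      by (intro two_le_card_nbhd_IntI[OF fin, of "Copy s (j, r)" "Copy s (j, r')"])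
         (auto simp: extremal_adj_def extremal_class_def cells_def)
  qed
qed

lemma extremal_class_spoke_coalition:
  assumes "j < k" "t < n"
  shows "total_2_coalition (extremal_vertices k n) (extremal_adj k n)
           (extremal_class k n j) {Spoke (j, t)}"
proof -
  have "extremal_class k n j \<inter> {Spoke (j, t)} = {}" by (simp add: extremal_class_def)
  moreover have "extremal_class k n j \<union> {Spoke (j, t)}
      = insert (Spoke (j, t)) (extremal_class k n j)"
    by blast
  ultimately show ?thesis
    unfolding total_2_coalition_def
    using assms extremal_class_not_dominating extremal_class_insert_spoke_dominating
      not_total_2_dominating_singleton[OF extremal_vertices_nonempty]
    by auto
qed

lemma total_2_coalition_partition_extremal:
  assumes "1 \<le> k" "1 \<le> n"
  shows "total_2_coalition_partition (extremal_vertices k n) (extremal_adj k n)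
           (extremal_partition k n)"
  unfolding total_2_coalition_partition_def
proof (intro conjI ballI)
  let ?V = "extremal_vertices k n"
    and ?fibre = "\<lambda>b. {z \<in> extremal_vertices k n. extremal_block z = b}"
  show "partition_on ?V (extremal_partition k n)"
    unfolding extremal_partition_def by (rule partition_on_fibres)
  have P: "extremal_partition k n = ?fibre ` (Inl ` {..<k} \<union> Inr ` spokes k n)"
    unfolding extremal_partition_def extremal_block_image[OF assms(1)] ..
  have spoke_fibre: "?fibre (Inr s) = {Spoke s}" if "s \<in> spokes k n" for s
  proof (intro equalityI subsetI)
    fix z assume "z \<in> ?fibre (Inr s)"
    then show "z \<in> {Spoke s}" by (cases z) auto
  qed (use that in simp)
  have class_fibre: "?fibre (Inl j) = extremal_class k n j" for j
    unfolding extremal_class_def ..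
  have spoke_not_in_class: "{Spoke s} \<noteq> extremal_class k n j" for s j
    using extremal_class_def by force
  fix U assume "U \<in> extremal_partition k n"
  then obtain b where b: "b \<in> Inl ` {..<k} \<union> Inr ` spokes k n" "U = ?fibre b"
    unfolding P by blast
  then consider (colour) j where "j < k" "b = Inl j" | (spoke) s where "s \<in> spokes k n" "b = Inr s"
    by blast
  then show "\<exists>W\<in>extremal_partition k n. W \<noteq> U \<and> total_2_coalition ?V (extremal_adj k n) U W"
  proof cases
    case (colour j)
    have U: "U = extremal_class k n j" using b(2) colour class_fibre by simp
    have "(j, 0) \<in> spokes k n" using colour assms by (simp add: spokes_def)
    show ?thesis
    proof (intro bexI conjI)
      show "{Spoke (j, 0)} \<in> extremal_partition k n"
        unfolding P using \<open>(j, 0) \<in> spokes k n\<close>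
        by (intro rev_image_eqI[of "Inr (j, 0)"]) (simp_all add: spoke_fibre)
      show "{Spoke (j, 0)} \<noteq> U" using U spoke_not_in_class by simp
      show "total_2_coalition ?V (extremal_adj k n) U {Spoke (j, 0)}"
        using U colour assms extremal_class_spoke_coalition[of j k 0 n] by simp
    qed
  next
    case (spoke s)
    have U: "U = {Spoke s}" using b(2) spoke spoke_fibre by simp
    obtain i t where s: "s = (i, t)" "i < k" "t < n" using spoke by (auto simp: spokes_def)
    show ?thesis
    proof (intro bexI conjI)
      show "extremal_class k n i \<in> extremal_partition k n"
        unfolding P using \<open>i < k\<close> by (intro rev_image_eqI[of "Inl i"]) (simp_all add: class_fibre)
      show "extremal_class k n i \<noteq> U" using U spoke_not_in_class by metis
      show "total_2_coalition ?V (extremal_adj k n) U (extremal_class k n i)"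
        using U s extremal_class_spoke_coalition[of i k t n]
        by (simp add: total_2_coalition_commute)
    qed
  qed
qed

lemma ex_nat_graph_TC2_attains_bound:
  assumes k: "1 \<le> k" and n: "2 * k + 1 \<le> n"
  shows "\<exists>(V :: nat set) E. graph V E \<and> min_degree V E = 2 * k \<and>
           max_degree V E = 2 * k - 1 + n \<and> TC2 V E = k + k * n"
proof -
  let ?V = "to_nat ` extremal_vertices k n" and ?E = "relabel to_nat (extremal_adj k n)"
  have G: "graph ?V ?E" by (rule graph_relabel[OF inj_to_nat graph_extremal[OF k]])
  have \<delta>: "min_degree ?V ?E = 2 * k" and \<Delta>: "max_degree ?V ?E = 2 * k - 1 + n"
    using min_degree_extremal[OF k n] max_degree_extremal[OF k n]
    by (simp_all add: min_degree_relabel max_degree_relabel)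
  have "TC2 ?V ?E = k + k * n"
  proof (rule TC2_eqI)
    show "total_2_coalition_partition ?V ?E ((`) to_nat ` extremal_partition k n)"
      using k n
      by (intro total_2_coalition_partition_relabel total_2_coalition_partition_extremal) auto
    show "card ((`) to_nat ` extremal_partition k n) = k + k * n"
      using card_extremal_partition[OF k] by (simp add: card_image_of_images)
  next
    fix P assume "total_2_coalition_partition ?V ?E P"
    from card_total_2_coalition_partition_le[OF G _ this]
    show "card P \<le> k + k * n" using \<delta> \<Delta> k n by (simp add: algebra_simps)
  qed
  then show ?thesis using G \<delta> \<Delta> by blast
qed

theorem theorem3p9:
  shows "(\<forall>(V :: 'a set) E. graph V E \<longrightarrow> min_degree V E \<ge> 2 \<longrightarrow>
            max_degree V E \<ge> 4 * (min_degree V E div 2) - 2 \<longrightarrow>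
            TC2 V E \<le> (min_degree V E div 2) * (max_degree V E - 2 * (min_degree V E div 2) + 1)
                      + (min_degree V E + 1) div 2)
       \<and> (\<forall>d::nat. d \<ge> 2 \<longrightarrow> even d \<longrightarrow>
            (\<exists>(V :: nat set) E. graph V E \<and> min_degree V E = d \<and>
               max_degree V E \<ge> 4 * (d div 2) - 2 \<and>
               TC2 V E = (d div 2) * (max_degree V E - 2 * (d div 2) + 1) + (d + 1) div 2))"
proof (intro conjI allI impI)
  fix V :: "'a set" and E
  assume "graph V E" "4 * (min_degree V E div 2) - 2 \<le> max_degree V E"
  then show "TC2 V E \<le> (min_degree V E div 2) * (max_degree V E - 2 * (min_degree V E div 2) + 1)
                      + (min_degree V E + 1) div 2"
    by (intro TC2_le card_total_2_coalition_partition_le)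
next
  fix d :: nat assume "2 \<le> d" "even d"
  then obtain k where k: "d = 2 * k" "1 \<le> k" by (auto elim!: evenE)
  then obtain V :: "nat set" and E where "graph V E" "min_degree V E = d" "max_degree V E = 4 * k"
    "TC2 V E = k + k * (2 * k + 1)"
    using ex_nat_graph_TC2_attains_bound[of k "2 * k + 1"] by auto
  then show "\<exists>(V :: nat set) E. graph V E \<and> min_degree V E = d \<and>
      max_degree V E \<ge> 4 * (d div 2) - 2 \<and>
      TC2 V E = (d div 2) * (max_degree V E - 2 * (d div 2) + 1) + (d + 1) div 2"
    using k by (intro exI[of _ V] exI[of _ E]) (simp add: algebra_simps)
qed

end
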